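(* The polynomials $P_n$ satisfy $P_0(y)=y-1$ and, for $n\ge1$, \[ P_n=nP_{n-1}-P'_{n-1}+\frac{1}{n}\sum_{k=1}^{n-1}k\bigl\{(k-1)P_{k-1}-P_k-P'_{k-1}\bigr\}P_{n-k-1}. \]
   Context: Let $A$ be the ring of formal series $a=\sum_{n=0}^\infty \frac{q_n(y)}{x^n}$, each $q_n$ a complex polynomial of degree at most $n$, with the obvious ring operations and the $x^{-1}$-adic topology. Formal derivatives: $a_x=-\sum_{n\ge1}\frac{n q_n(y)}{x^{n+1}}$, $a_y=\sum_{n\ge1}\frac{q_n'(y)}{x^n}$. For $1+u\in A$ with $u$ having zero constant term, $\log(1+u)=\sum_{k\ge1}(-1)^{k+1}u^k/k$. Let $V$ be the unique solution in $A$ of $V=1+\frac{y}{x}-\frac{1}{x}V-V_x-\frac{1}{x}V_y+\frac{1}{x}\log V$, and define polynomials $P_{n-1}$ ($n\ge1$) by $V=1+\sum_{n=1}^\infty\frac{P_{n-1}(y)}{x^n}$. Primes denote derivatives in $y$. *)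

theory Defs
  imports "HOL-Computational_Algebra.Polynomial"
begin

text \<open>An element a = sum_n q_n(y) / x^n of the ring A is represented by its
coefficient sequence q :: nat => complex poly, with degree (q n) <= n.\<close>

type_synonym ser = "nat \<Rightarrow> complex poly"

definition inA :: "ser \<Rightarrow> bool" where
  "inA a \<longleftrightarrow> (\<forall>n. degree (a n) \<le> n)"

definition sconst :: "complex poly \<Rightarrow> ser" where
  "sconst c = (\<lambda>n. if n = 0 then c else 0)"

definition sadd :: "ser \<Rightarrow> ser \<Rightarrow> ser" where
  "sadd a b = (\<lambda>n. a n + b n)"

definition ssub :: "ser \<Rightarrow> ser \<Rightarrow> ser" where
  "ssub a b = (\<lambda>n. a n - b n)"

definition smul :: "ser \<Rightarrow> ser \<Rightarrow> ser" where
  "smul a b = (\<lambda>n. \<Sum>i\<le>n. a i * b (n - i))"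

fun spow :: "ser \<Rightarrow> nat \<Rightarrow> ser" where
  "spow a 0 = sconst 1"
| "spow a (Suc k) = smul a (spow a k)"

definition sdivx :: "ser \<Rightarrow> ser" where
  "sdivx a = (\<lambda>n. if n = 0 then 0 else a (n - 1))"

text \<open>Formal derivative in x: a_x = - sum_{n>=1} n q_n / x^(n+1).\<close>
definition sdx :: "ser \<Rightarrow> ser" where
  "sdx a = (\<lambda>m. if m = 0 then 0 else - smult (of_nat (m - 1)) (a (m - 1)))"

definition sdy :: "ser \<Rightarrow> ser" where
  "sdy a = (\<lambda>n. pderiv (a n))"

text \<open>The series converges x^{-1}-adically; since u^k has no terms of x-order below k,
the coefficient of x^{-n} is the finite sum over 1 <= k <= n.\<close>
definition slog1p :: "ser \<Rightarrow> ser" where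
  "slog1p u = (\<lambda>n. \<Sum>k\<in>{1..n}. smult ((-1) ^ (k + 1) / of_nat k) (spow u k n))"

text \<open>log of an element 1 + u (constant term 1).\<close>
definition slog :: "ser \<Rightarrow> ser" where
  "slog a = slog1p (\<lambda>n. if n = 0 then 0 else a n)"

text \<open>The defining equation V = 1 + y/x - V/x - V_x - V_y/x + (log V)/x,
with V in A having constant term 1 (so that log V is defined).\<close>
definition Veq :: "ser \<Rightarrow> bool" where
  "Veq v \<longleftrightarrow> inA v \<and> v 0 = 1 \<and>
     v = sadd (ssub (ssub (ssub (sadd (sconst 1) (sdivx (sconst [:0, 1:])))
                                (sdivx v)) (sdx v)) (sdivx (sdy v))) (sdivx (slog v))"

definition V :: ser where
  "V = (THE v. Veq v)"

text \<open>V = 1 + sum_{n>=1} P_{n-1}(y) / x^n.\<close>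
definition P :: "nat \<Rightarrow> complex poly" where
  "P n = V (Suc n)"

end

theory Submission
  imports Defs "HOL-Computational_Algebra.Formal_Power_Series"
begin

unbundle fps_syntax

text \<open>Comparing coefficients of x^-(n+1) in the defining equation expresses V_(n+1)
  through V_0, ..., V_n, so V exists and is unique, and gives
  P_n = (n - 1) P_(n-1) - P'_(n-1) + l_n, where l_n is the coefficient of x^-n in log V.
  In the variable t = 1/x the logarithm L = log (1 + U) satisfies (1 + U) t L' = t U',
  i.e. n l_n = n U_n - (\<Sum>k=1..n-1. k l_k U_(n-k)). Eliminating the l_k by the first
  relation yields the recurrence.\<close>

lemma smul_eq_fps_mult_nth: "smul a b = fps_nth (Abs_fps a * Abs_fps b)"
  by (auto simp: smul_def fps_mult_nth atLeast0AtMost)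

lemma spow_eq_fps_power_nth: "spow a k = fps_nth (Abs_fps a ^ k)"
  by (induction k) (auto simp: sconst_def smul_eq_fps_mult_nth fps_nth_inverse)

definition log1p_trunc :: "complex poly fps \<Rightarrow> nat \<Rightarrow> complex poly fps" where
  "log1p_trunc U N = (\<Sum>k\<in>{1..N}. fps_const [:(-1) ^ (k + 1) / of_nat k:] * U ^ k)"

lemma log1p_trunc_nth:
  assumes "u 0 = 0" and "m \<le> N"
  shows "log1p_trunc (Abs_fps u) N $ m = slog1p u m"
proof -
  have "log1p_trunc (Abs_fps u) N $ m
      = (\<Sum>k\<in>{1..N}. smult ((-1) ^ (k + 1) / of_nat k) ((Abs_fps u ^ k) $ m))"
    by (simp add: log1p_trunc_def fps_sum_nth)
  also have "\<dots> = (\<Sum>k\<in>{1..m}. smult ((-1) ^ (k + 1) / of_nat k) ((Abs_fps u ^ k) $ m))"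
    using assms startsby_zero_power_prefix[of "Abs_fps u"]
    by (intro sum.mono_neutral_right) auto
  finally show ?thesis
    by (simp add: slog1p_def spow_eq_fps_power_nth)
qed

lemma log1p_trunc_coeff_times_index:
  assumes "k \<ge> 1"
  shows "fps_const [:(-1) ^ (k + 1) / of_nat k:] * of_nat k = ((-1) ^ (k - 1) :: complex poly fps)"
proof -
  have "(-1::complex) ^ (k + 1) = (-1) ^ (k - 1)"
    using assms by (cases k) auto
  then have "[:(-1) ^ (k + 1) / of_nat k:] * of_nat k = [:(-1::complex) ^ (k - 1):]"
    using assms by (simp add: of_nat_poly)
  moreover have "[:(-1::complex) ^ (k - 1):] = (-1) ^ (k - 1)"
    by (metis minus_pCons minus_zero one_pCons poly_const_pow)
  ultimately show ?thesis
    by (metis fps_const_mult fps_of_nat fps_const_neg fps_const_power fps_const_1_eq_1)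
qed

lemma fps_deriv_log1p_trunc:
  "fps_deriv (log1p_trunc U N) = fps_deriv U * (\<Sum>j<N. (-U) ^ j)"
proof -
  have "fps_deriv (log1p_trunc U N)
      = (\<Sum>k\<in>{1..N}. fps_const [:(-1) ^ (k + 1) / of_nat k:] * (of_nat k * fps_deriv U * U ^ (k - 1)))"
    by (simp add: log1p_trunc_def fps_deriv_sum fps_deriv_power')
  also have "\<dots> = (\<Sum>k\<in>{1..N}. fps_deriv U * (-U) ^ (k - 1))"
  proof (intro sum.cong refl)
    fix k assume "k \<in> {1..N}"
    then have "fps_const [:(-1) ^ (k + 1) / of_nat k:] * of_nat k = ((-1) ^ (k - 1) :: complex poly fps)"
      by (intro log1p_trunc_coeff_times_index) auto
    then show "fps_const [:(-1) ^ (k + 1) / of_nat k:] * (of_nat k * fps_deriv U * U ^ (k - 1))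
        = fps_deriv U * (-U) ^ (k - 1)"
      by (metis (no_types, lifting) mult.assoc mult.commute power_minus)
  qed
  also have "\<dots> = fps_deriv U * (\<Sum>j<N. (-U) ^ j)"
    unfolding sum_distrib_left
    by (rule sum.reindex_bij_witness[where i="\<lambda>j. j + 1" and j="\<lambda>k. k - 1"]) auto
  finally show ?thesis .
qed

text \<open>The truncation error \<open>(-U)\<^sup>N\<close> is invisible in the coefficients of order \<open>\<le> N\<close>.\<close>

lemma log1p_trunc_derivative_equation:
  "(1 + U) * (fps_X * fps_deriv (log1p_trunc U N)) = fps_X * fps_deriv U * (1 - (-U) ^ N)"
  using one_diff_power_eq[of "-U" N] by (simp add: fps_deriv_log1p_trunc)

lemma fps_X_deriv_nth: "(fps_X * fps_deriv f) $ n = of_nat n * f $ n"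
  by (simp add: fps_mult_fps_X_deriv_shift)

lemma slog1p_coeff_recurrence:
  assumes u0: "u 0 = 0" and n: "n \<ge> 1"
  shows "smult (of_nat n) (slog1p u n) = smult (of_nat n) (u n)
          - (\<Sum>k\<in>{1..n-1}. smult (of_nat k) (slog1p u k) * u (n - k))"
proof -
  define U where "U = Abs_fps u"
  define L where "L = log1p_trunc U n"
  have L_nth: "m \<le> n \<Longrightarrow> L $ m = slog1p u m" for m
    unfolding L_def U_def by (rule log1p_trunc_nth[of u, OF u0])
  have error_vanishes: "(fps_X * fps_deriv U * (-U) ^ n) $ n = 0"
    unfolding fps_mult_nth[of _ "(-U)^n"]
  proof (intro sum.neutral ballI)
    fix i assume "i \<in> {0..n}"
    show "(fps_X * fps_deriv U) $ i * ((-U) ^ n) $ (n - i) = 0"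
    proof (cases "i = 0")
      case False
      with \<open>i \<in> {0..n}\<close> have "((-U) ^ n) $ (n - i) = 0"
        using startsby_zero_power_prefix[of "-U" n] u0 by (simp add: U_def)
      then show ?thesis by simp
    qed (simp add: fps_X_deriv_nth)
  qed
  have "((1 + U) * (fps_X * fps_deriv L)) $ n = (fps_X * fps_deriv U * (1 - (-U) ^ n)) $ n"
    unfolding L_def by (simp only: log1p_trunc_derivative_equation)
  moreover have "((1 + U) * (fps_X * fps_deriv L)) $ n
      = of_nat n * slog1p u n + (U * (fps_X * fps_deriv L)) $ n"
    by (simp add: distrib_right fps_X_deriv_nth L_nth)
  moreover have "(fps_X * fps_deriv U * (1 - (-U) ^ n)) $ n = of_nat n * u n"
    using error_vanishes by (simp add: right_diff_distrib fps_X_deriv_nth U_def)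
  moreover have "(U * (fps_X * fps_deriv L)) $ n
      = (\<Sum>i\<in>{1..n-1}. u i * (of_nat (n - i) * slog1p u (n - i)))"
    unfolding fps_mult_nth[of U] fps_X_deriv_nth
  proof (intro sum.mono_neutral_cong_right ballI)
    fix i assume "i \<in> {0..n} - {1..n-1}"
    then have "i = 0 \<or> i = n" by auto
    then show "U $ i * (of_nat (n - i) * L $ (n - i)) = 0" using u0 by (auto simp: U_def)
  qed (auto simp: L_nth U_def)
  moreover have "\<dots> = (\<Sum>k\<in>{1..n-1}. smult (of_nat k) (slog1p u k) * u (n - k))"
    by (rule sum.reindex_bij_witness[where i="\<lambda>k. n - k" and j="\<lambda>i. n - i"])
       (auto simp: of_nat_poly mult.commute)
  ultimately show ?thesis
    by (simp add: of_nat_poly algebra_simps)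
qed

lemma slog_coeff_recurrence:
  assumes "n \<ge> 1"
  shows "smult (of_nat n) (slog a n) = smult (of_nat n) (a n)
          - (\<Sum>k\<in>{1..n-1}. smult (of_nat k) (slog a k) * a (n - k))"
proof -
  let ?u = "\<lambda>n. if n = 0 then 0 else a n"
  have "(\<Sum>k\<in>{1..n-1}. smult (of_nat k) (slog a k) * a (n - k))
      = (\<Sum>k\<in>{1..n-1}. smult (of_nat k) (slog1p ?u k) * ?u (n - k))"
    by (intro sum.cong) (auto simp: slog_def)
  then show ?thesis
    using slog1p_coeff_recurrence[of ?u n] assms by (simp add: slog_def)
qed

lemma smul_cong: "(\<And>i. i \<le> n \<Longrightarrow> a i = a' i) \<Longrightarrow> (\<And>i. i \<le> n \<Longrightarrow> b i = b' i) \<Longrightarrow> smul a b n = smul a' b' n"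
  unfolding smul_def by (intro sum.cong) auto

lemma spow_cong: "(\<And>i. i \<le> n \<Longrightarrow> a i = b i) \<Longrightarrow> m \<le> n \<Longrightarrow> spow a k m = spow b k m"
  by (induction k arbitrary: m) (auto intro!: smul_cong)

lemma slog_cong: "(\<And>i. i \<le> n \<Longrightarrow> a i = b i) \<Longrightarrow> slog a n = slog b n"
  unfolding slog_def slog1p_def
  by (intro sum.cong refl arg_cong[where f="smult _"] spow_cong[where n=n]) auto

lemma degree_smul_le:
  "(\<And>i. i \<le> n \<Longrightarrow> degree (a i) \<le> i) \<Longrightarrow> (\<And>i. i \<le> n \<Longrightarrow> degree (b i) \<le> i)
    \<Longrightarrow> degree (smul a b n) \<le> n"
  unfolding smul_def
proof (intro degree_sum_le)
  fix i assume a: "\<And>i. i \<le> n \<Longrightarrow> degree (a i) \<le> i" and b: "\<And>i. i \<le> n \<Longrightarrow> degree (b i) \<le> i"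
    and i: "i \<in> {..n}"
  have "degree (a i * b (n - i)) \<le> degree (a i) + degree (b (n - i))" by (rule degree_mult_le)
  also have "\<dots> \<le> i + (n - i)" using a b i by (intro add_mono) auto
  finally show "degree (a i * b (n - i)) \<le> n" using i by auto
qed auto

lemma degree_spow_le:
  "(\<And>i. i \<le> n \<Longrightarrow> degree (a i) \<le> i) \<Longrightarrow> m \<le> n \<Longrightarrow> degree (spow a k m) \<le> m"
  by (induction k arbitrary: m) (auto simp: sconst_def intro!: degree_smul_le)

lemma degree_slog_le:
  assumes "\<And>i. i \<le> n \<Longrightarrow> degree (a i) \<le> i"
  shows "degree (slog a n) \<le> n"
  unfolding slog_def slog1p_def
  using assms by (intro degree_sum_le order_trans[OF degree_smult_le] degree_spow_le[where n=n]) auto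

text \<open>The coefficient of x^-(n+1) of the right-hand side of the defining equation.\<close>

definition next_coeff :: "ser \<Rightarrow> nat \<Rightarrow> complex poly" where
  "next_coeff v n = (if n = 0 then [:0, 1:] else 0) - v n + smult (of_nat n) (v n) - pderiv (v n) + slog v n"

lemma next_coeff_cong: "(\<And>i. i \<le> n \<Longrightarrow> a i = b i) \<Longrightarrow> next_coeff a n = next_coeff b n"
  unfolding next_coeff_def using slog_cong[of n a b] by simp

lemma degree_next_coeff_le:
  assumes deg: "\<And>i. i \<le> n \<Longrightarrow> degree (a i) \<le> i"
  shows "degree (next_coeff a n) \<le> Suc n"
proof -
  have an: "degree (a n) \<le> Suc n" using deg by fastforce
  then have "degree (smult (of_nat n) (a n)) \<le> Suc n" "degree (pderiv (a n)) \<le> Suc n"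
    using degree_smult_le order_trans by (blast, simp add: degree_pderiv)
  moreover have "degree (slog a n) \<le> Suc n" using degree_slog_le[of n a] deg by fastforce
  ultimately show ?thesis unfolding next_coeff_def using an
    by (intro degree_add_le degree_diff_le) auto
qed

lemma Veq_iff_recursion: "Veq v \<longleftrightarrow> inA v \<and> v 0 = 1 \<and> (\<forall>n. v (Suc n) = next_coeff v n)"
proof -
  define rhs where "rhs = sadd (ssub (ssub (ssub (sadd (sconst 1) (sdivx (sconst [:0, 1:])))
                                (sdivx v)) (sdx v)) (sdivx (sdy v))) (sdivx (slog v))"
  have "rhs 0 = 1" "rhs (Suc n) = next_coeff v n" for n
    by (simp_all add: rhs_def sadd_def ssub_def sconst_def sdivx_def sdx_def sdy_def next_coeff_def)
  then have "v = rhs \<longleftrightarrow> v 0 = 1 \<and> (\<forall>n. v (Suc n) = next_coeff v n)"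
    by (metis fun_eq_iff not0_implies_Suc)
  then show ?thesis
    unfolding Veq_def rhs_def by blast
qed

primrec V_approx :: "nat \<Rightarrow> ser" where
  "V_approx 0 = sconst 1"
| "V_approx (Suc n) = (V_approx n)(Suc n := next_coeff (V_approx n) n)"

definition V_lim :: ser where "V_lim i = V_approx i i"

lemma V_approx_eq_V_lim: "i \<le> n \<Longrightarrow> V_approx n i = V_lim i"
proof (induction n)
  case 0
  then show ?case by (simp add: V_lim_def)
next
  case (Suc n)
  show ?case
  proof (cases "i = Suc n")
    case True
    then show ?thesis by (simp add: V_lim_def)
  next
    case False
    then show ?thesis using Suc by simp
  qed
qed

lemma V_lim_Suc: "V_lim (Suc n) = next_coeff V_lim n"
proof -
  have "V_lim (Suc n) = next_coeff (V_approx n) n" by (simp add: V_lim_def)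
  also have "\<dots> = next_coeff V_lim n"
    by (rule next_coeff_cong) (rule V_approx_eq_V_lim)
  finally show ?thesis .
qed

lemma degree_V_lim: "degree (V_lim n) \<le> n"
proof -
  have "\<forall>i\<le>n. degree (V_lim i) \<le> i"
  proof (induction n)
    case 0
    then show ?case by (simp add: V_lim_def sconst_def)
  next
    case (Suc n)
    then show ?case using degree_next_coeff_le[of n V_lim] by (auto simp: V_lim_Suc le_Suc_eq)
  qed
  then show ?thesis by simp
qed

lemma Veq_V_lim: "Veq V_lim"
  by (simp add: Veq_iff_recursion inA_def degree_V_lim V_lim_Suc) (simp add: V_lim_def sconst_def)

lemma Veq_unique: assumes "Veq v" "Veq w" shows "v = w"
proof -
  have "\<forall>i\<le>n. v i = w i" for n
  proof (induction n)
    case 0 then show ?case using assms by (simp add: Veq_iff_recursion)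
  next
    case (Suc n)
    then have "v (Suc n) = w (Suc n)"
      using assms next_coeff_cong[of n v w] by (simp add: Veq_iff_recursion)
    then show ?case using Suc by (auto simp: le_Suc_eq)
  qed
  then show ?thesis by auto
qed

lemma Veq_V: "Veq V"
  unfolding V_def by (rule theI[where P = Veq, OF Veq_V_lim Veq_unique[OF _ Veq_V_lim]])

lemma V_0: "V 0 = 1" and V_Suc: "V (Suc n) = next_coeff V n"
  using Veq_V by (simp_all add: Veq_iff_recursion)

lemma P_0: "P 0 = [:-1, 1:]"
  by (simp add: P_def V_Suc V_0 next_coeff_def slog_def slog1p_def one_pCons)

lemma V_eq_P: "k \<ge> 1 \<Longrightarrow> V k = P (k - 1)"
  by (simp add: P_def)

lemma slog_V_eq:
  assumes "k \<ge> 1"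
  shows "slog V k = P k - smult (of_nat (k - 1)) (P (k - 1)) + pderiv (P (k - 1))"
proof -
  have "smult (of_nat k) (P (k - 1)) = smult (of_nat (k - 1)) (P (k - 1)) + P (k - 1)"
    using assms by (simp add: of_nat_diff smult_diff_left)
  moreover have "P k = next_coeff V k"
    by (simp add: P_def V_Suc)
  ultimately show ?thesis
    using assms by (simp add: next_coeff_def V_eq_P algebra_simps)
qed

theorem theorem4p4:
  shows "P 0 = [:-1, 1:] \<and>
    (\<forall>n\<ge>1. P n = smult (of_nat n) (P (n - 1)) - pderiv (P (n - 1))
       + smult (1 / of_nat n)
           (\<Sum>k\<in>{1..n-1}. smult (of_nat k)
              ((smult (of_nat (k - 1)) (P (k - 1)) - P k - pderiv (P (k - 1))) * P (n - k - 1))))"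
proof (intro conjI P_0 allI impI)
  fix n :: nat assume n: "n \<ge> 1"
  have "(\<Sum>k\<in>{1..n-1}. smult (of_nat k)
              ((smult (of_nat (k - 1)) (P (k - 1)) - P k - pderiv (P (k - 1))) * P (n - k - 1)))
      = - (\<Sum>k\<in>{1..n-1}. smult (of_nat k) (slog V k) * V (n - k))"
    unfolding sum_negf[symmetric]
  proof (intro sum.cong refl)
    fix k assume k: "k \<in> {1..n-1}"
    then have "smult (of_nat (k - 1)) (P (k - 1)) - P k - pderiv (P (k - 1)) = - slog V k"
      by (simp add: slog_V_eq)
    moreover have "V (n - k) = P (n - k - 1)"
      using k V_eq_P[of "n - k"] by auto
    ultimately show "smult (of_nat k) ((smult (of_nat (k - 1)) (P (k - 1)) - P k - pderiv (P (k - 1)))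
        * P (n - k - 1)) = - (smult (of_nat k) (slog V k) * V (n - k))"
      by simp
  qed
  also have "\<dots> = smult (of_nat n) (slog V n - P (n - 1))"
    using slog_coeff_recurrence[OF n, of V] n by (simp add: V_eq_P smult_diff_right)
  finally show "P n = smult (of_nat n) (P (n - 1)) - pderiv (P (n - 1))
       + smult (1 / of_nat n) (\<Sum>k\<in>{1..n-1}. smult (of_nat k)
              ((smult (of_nat (k - 1)) (P (k - 1)) - P k - pderiv (P (k - 1))) * P (n - k - 1)))"
    using slog_V_eq[OF n] n by (simp add: smult_diff_right of_nat_diff smult_diff_left)
qed

end
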